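(* Assume (C) and (I). Fix $i\in S$ and $Q,Q^*\in\mathcal Q$. Then, as $\varepsilon\downarrow0$, $$F(i,Q\otimes_\varepsilon Q^* )=F_\varepsilon(i,Q^* )+\big[f(0,i,Q_i)+F_\varepsilon(Q^* )\cdot Q_i\big]\varepsilon+o(\varepsilon).$$ Suppose in addition that condition (H) holds. Then, as $\varepsilon\downarrow0$, $$F(i,Q^* )-F(i,Q\otimes_\varepsilon Q^* )=\big(\Gamma^{Q^*}_i(Q^*_i)-\Gamma^{Q^*}_i(Q_i)\big)\varepsilon+o(\varepsilon).$$
   Context: Let $S=\{1,\dots,N\}$, $N\in\mathbb N$. For $i\in S$ let $E_i=\{q=(q_1,\dots,q_N)\in\mathbb R^N: q_j\ge0\text{ for }j\ne i,\ q_i=-\sum_{j\ne i}q_j\}$ and let $D_i\subseteq E_i$ be given. Let $\mathcal Q=\{Q\in\mathbb R^{N\times N}: Q_i\in D_i\ \forall i\in S\}$, where $Q_i$ is the $i$-th row of $Q$ and $q_{ij}$ its entries. For $Q\in\mathcal Q$, $X=(X_t)_{t\ge0}$ is a time-homogeneous continuous-time Markov chain on $S$ with generator $Q$, and $\mathbb E_{i,Q}$ (or $\mathbb E_i$) is the expectation given $X_0=i$. A payoff function $f$ assigns a real number $f(t,i,\mathbf q)$ to each $t\ge0$, $i\in S$, $\mathbf q\in D_i$. Conditions: (C) $t\mapsto f(t,i,\mathbf q)$ is continuous on $[0,\infty)$ for each $i,\mathbf q$; (I) $\int_0^\infty\sup_{i\in S,\mathbf q\in D_i,\|\mathbf q\|\le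 c}|f(t,i,\mathbf q)|\,dt<\infty$ for every $c>0$ (Euclidean norm). Define $F(i,Q)=\mathbb E_{i,Q}[\int_0^\infty f(t,X_t,Q_{X_t})dt]$, $F(Q)=(F(1,Q),\dots,F(N,Q))$, and for $\varepsilon>0$, $F_\varepsilon(i,Q)=\mathbb E_{i,Q}[\int_0^\infty f(t+\varepsilon,X_t,Q_{X_t})dt]$, $F_\varepsilon(Q)=(F_\varepsilon(1,Q),\dots,F_\varepsilon(N,Q))$. For $Q,Q'\in\mathcal Q$ and $\varepsilon>0$, $Q\otimes_\varepsilon Q'$ means that $X$ evolves with generator $Q$ on $[0,\varepsilon]$ and with generator $Q'$ on $(\varepsilon,\infty)$; $F(i,Q\otimes_\varepsilon Q')=\mathbb E_i[\int_0^\varepsilon f(t,X_t,Q_{X_t})dt+\int_\varepsilon^\infty f(t,X_t,Q'_{X_t})dt]$ with $X_0=i$. For $Q^*\in\mathcal Q$, $i\in S$, $\mathbf q\in D_i$, put $\Gamma^{Q^*}_i(\mathbf q)=f(0,i,\mathbf q)+\mathbf q\cdot F(Q^* )$. Condition (H): there is a nonnegative function $h(t,\varepsilon;i,\mathbf q)$ with $|f(t+\varepsilon,i,\mathbf q)-f(t,i,\mathbf q)|\le h(t,\varepsilon;i,\mathbf q)$ for all $t\ge0,\varepsilon>0,i\in S,\mathbf q\in D_i$, such that $h$ is nondecreasing in $\varepsilon$, $\lim_{\varepsilon\downarrow0}h(t,\varepsilon;i,\mathbf q)=0$, and $\int_0^\infty h(t,\varepsilon;i,\mathbf q)dt<\infty$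 for all sufficiently small $\varepsilon>0$. *)

theory Defs
  imports "HOL-Analysis.Analysis"
begin

text \<open>State space S = {1..N} is modelled by a finite type 'n. Generators are
  real matrices real^'n^'n, rows are Q $ i.\<close>

definition E_set :: "'n::finite \<Rightarrow> (real^'n) set" where
  "E_set i = {q. (\<forall>j. j \<noteq> i \<longrightarrow> q $ j \<ge> 0) \<and> q $ i = - (\<Sum>j\<in>UNIV - {i}. q $ j)}"

definition genset :: "('n::finite \<Rightarrow> (real^'n) set) \<Rightarrow> (real^'n^'n) set" where
  "genset D = {Q. \<forall>i. Q $ i \<in> D i}"

definition mat_pow :: "real^'n^'n \<Rightarrow> nat \<Rightarrow> real^'n^'n" where
  "mat_pow Q n = ((\<lambda>M. M ** Q) ^^ n) (mat 1)"

definition trans_mat :: "real^'n^'n \<Rightarrow> real \<Rightarrow> real^'n^'n" where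
  "trans_mat Q t = (\<Sum>n. (t ^ n / fact n) *\<^sub>R mat_pow Q n)"

text \<open>E_{i,Q}[ int_0^oo g(t, X_t, Q_{X_t}) dt ], computed via the transition matrix.\<close>

definition Fval :: "(real \<Rightarrow> 'n::finite \<Rightarrow> real^'n \<Rightarrow> real) \<Rightarrow> real^'n^'n \<Rightarrow> 'n \<Rightarrow> real" where
  "Fval f Q i = (LBINT t:{0..}. (\<Sum>j\<in>UNIV. trans_mat Q t $ i $ j * f t j (Q $ j)))"

definition Fshift :: "(real \<Rightarrow> 'n::finite \<Rightarrow> real^'n \<Rightarrow> real) \<Rightarrow> real \<Rightarrow> real^'n^'n \<Rightarrow> 'n \<Rightarrow> real" where
  "Fshift f \<epsilon> Q i = (LBINT t:{0..}. (\<Sum>j\<in>UNIV. trans_mat Q t $ i $ j * f (t + \<epsilon>) j (Q $ j)))"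

text \<open>F(i, Q \<otimes>_eps Q'): generator Q on [0,eps], generator Q' afterwards
  (Markov property at time eps).\<close>

definition Fswitch :: "(real \<Rightarrow> 'n::finite \<Rightarrow> real^'n \<Rightarrow> real) \<Rightarrow> real^'n^'n \<Rightarrow> real^'n^'n
    \<Rightarrow> real \<Rightarrow> 'n \<Rightarrow> real" where
  "Fswitch f Q Q' \<epsilon> i =
     (LBINT t:{0..\<epsilon>}. (\<Sum>j\<in>UNIV. trans_mat Q t $ i $ j * f t j (Q $ j)))
   + (LBINT t:{\<epsilon><..}. (\<Sum>j\<in>UNIV. (trans_mat Q \<epsilon> ** trans_mat Q' (t - \<epsilon>)) $ i $ j * f t j (Q' $ j)))"

definition GammaQ :: "(real \<Rightarrow> 'n::finite \<Rightarrow> real^'n \<Rightarrow> real) \<Rightarrow> real^'n^'n \<Rightarrow> 'n \<Rightarrow> real^'n \<Rightarrow> real" where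
  "GammaQ f Qs i q = f 0 i q + q \<bullet> (\<chi> j. Fval f Qs j)"

definition condC :: "('n::finite \<Rightarrow> (real^'n) set) \<Rightarrow> (real \<Rightarrow> 'n \<Rightarrow> real^'n \<Rightarrow> real) \<Rightarrow> bool" where
  "condC D f = (\<forall>i. \<forall>q\<in>D i. continuous_on {0..} (\<lambda>t. f t i q))"

definition condI :: "('n::finite \<Rightarrow> (real^'n) set) \<Rightarrow> (real \<Rightarrow> 'n \<Rightarrow> real^'n \<Rightarrow> real) \<Rightarrow> bool" where
  "condI D f = (\<forall>c>0. (\<integral>\<^sup>+ t. (SUP p\<in>{(i, q). q \<in> D i \<and> norm q \<le> c}.
        ennreal \<bar>f t (fst p) (snd p)\<bar>) * indicator {0..} t \<partial>lborel) < \<infinity>)"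

definition condH :: "('n::finite \<Rightarrow> (real^'n) set) \<Rightarrow> (real \<Rightarrow> 'n \<Rightarrow> real^'n \<Rightarrow> real) \<Rightarrow> bool" where
  "condH D f = (\<exists>h :: real \<Rightarrow> real \<Rightarrow> 'n \<Rightarrow> real^'n \<Rightarrow> real.
     (\<forall>t\<ge>0. \<forall>\<epsilon>>0. \<forall>i. \<forall>q\<in>D i.
        h t \<epsilon> i q \<ge> 0 \<and> \<bar>f (t + \<epsilon>) i q - f t i q\<bar> \<le> h t \<epsilon> i q) \<and>
     (\<forall>t\<ge>0. \<forall>i. \<forall>q\<in>D i. \<forall>\<epsilon>1 \<epsilon>2. 0 < \<epsilon>1 \<longrightarrow> \<epsilon>1 \<le> \<epsilon>2 \<longrightarrow> h t \<epsilon>1 i q \<le> h t \<epsilon>2 i q) \<and>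
     (\<forall>t\<ge>0. \<forall>i. \<forall>q\<in>D i. ((\<lambda>\<epsilon>. h t \<epsilon> i q) \<longlongrightarrow> 0) (at_right 0)) \<and>
     (\<forall>i. \<forall>q\<in>D i. \<forall>\<^sub>F \<epsilon> in at_right 0.
        (\<integral>\<^sup>+ t. ennreal (h t \<epsilon> i q) * indicator {0..} t \<partial>lborel) < \<infinity>))"

end

theory Submission
  imports Defs
begin

(* The transition matrices trans_mat Q t are the exponentials e^(tQ) in the Banach algebra of
   square matrices with the maximum-row-sum norm; for a generator Q they are stochastic.
   Conditioning on the state at time eps (the Markov property) gives
     Fswitch Q Qs eps i = int_0^eps (e^(tQ) f)_i dt + sum_k (e^(eps Q))_ik Fshift eps Qs k,
   where the integral is eps f(0,i,Q_i) + o(eps), e^(eps Q) = I + eps Q + o(eps), and Fshift eps Qs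
   is bounded in eps.  For Q = Qs the same identity reads
   Fval Qs = o(1) + (I + o(1)) Fshift eps Qs, so Fshift eps Qs -> Fval Qs, and subtracting the
   first claims for Qs and for Q gives the second one. *)

definition rownorm :: "real^'n^'n::finite \<Rightarrow> real" where
  "rownorm A = Max (range (\<lambda>i. \<Sum>j\<in>UNIV. \<bar>A $ i $ j\<bar>))"

lemma rownorm_ge: "(\<Sum>j\<in>UNIV. \<bar>A $ i $ j\<bar>) \<le> rownorm A"
  unfolding rownorm_def by (rule Max_ge) auto

lemma rownorm_le_iff: "rownorm A \<le> B \<longleftrightarrow> (\<forall>i. (\<Sum>j\<in>UNIV. \<bar>A $ i $ j\<bar>) \<le> B)"
  unfolding rownorm_def by (subst Max_le_iff) auto

lemma abs_entry_le_rownorm: "\<bar>A $ i $ j\<bar> \<le> rownorm A"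
  by (rule order_trans[OF member_le_sum rownorm_ge]) auto

lemma rownorm_nonneg: "0 \<le> rownorm A"
  using abs_entry_le_rownorm abs_ge_zero order_trans by blast

lemma rownorm_eq_0_iff: "rownorm A = 0 \<longleftrightarrow> A = 0"
proof
  assume "rownorm A = 0"
  then show "A = 0"
    using abs_entry_le_rownorm[of A] by (simp add: vec_eq_iff)
qed (simp add: rownorm_def)

lemma rownorm_add: "rownorm (A + B) \<le> rownorm A + rownorm B"
  unfolding rownorm_le_iff
proof
  fix i
  have "(\<Sum>j\<in>UNIV. \<bar>(A + B) $ i $ j\<bar>) \<le> (\<Sum>j\<in>UNIV. \<bar>A $ i $ j\<bar> + \<bar>B $ i $ j\<bar>)"
    by (rule sum_mono) simp
  also have "\<dots> \<le> rownorm A + rownorm B"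
    using rownorm_ge[of A i] rownorm_ge[of B i] by (simp add: sum.distrib)
  finally show "(\<Sum>j\<in>UNIV. \<bar>(A + B) $ i $ j\<bar>) \<le> rownorm A + rownorm B" .
qed

lemma rownorm_scaleR: "rownorm (r *\<^sub>R A) = \<bar>r\<bar> * rownorm A"
proof -
  have "rownorm (r *\<^sub>R A) = Max ((*) \<bar>r\<bar> ` range (\<lambda>i. \<Sum>j\<in>UNIV. \<bar>A $ i $ j\<bar>))"
    by (simp add: rownorm_def abs_mult sum_distrib_left image_image)
  also have "\<dots> = \<bar>r\<bar> * rownorm A"
    unfolding rownorm_def by (rule mono_Max_commute[symmetric]) (auto simp: mono_def mult_left_mono)
  finally show ?thesis .
qed

lemma rownorm_mult: "rownorm (A ** B) \<le> rownorm A * rownorm B"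
  unfolding rownorm_le_iff
proof
  fix i
  have "(\<Sum>j\<in>UNIV. \<bar>(A ** B) $ i $ j\<bar>) \<le> (\<Sum>j\<in>UNIV. \<Sum>k\<in>UNIV. \<bar>A $ i $ k\<bar> * \<bar>B $ k $ j\<bar>)"
    by (rule sum_mono) (simp add: matrix_matrix_mult_def order_trans[OF sum_abs] abs_mult)
  also have "\<dots> = (\<Sum>k\<in>UNIV. \<bar>A $ i $ k\<bar> * (\<Sum>j\<in>UNIV. \<bar>B $ k $ j\<bar>))"
    by (subst sum.swap) (simp add: sum_distrib_left)
  also have "\<dots> \<le> (\<Sum>k\<in>UNIV. \<bar>A $ i $ k\<bar>) * rownorm B"
    unfolding sum_distrib_right by (auto intro!: sum_mono mult_left_mono rownorm_ge)
  also have "\<dots> \<le> rownorm A * rownorm B"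
    by (intro mult_right_mono rownorm_ge rownorm_nonneg)
  finally show "(\<Sum>j\<in>UNIV. \<bar>(A ** B) $ i $ j\<bar>) \<le> rownorm A * rownorm B" .
qed

lemma sum_mat_1_row: "(\<Sum>j\<in>UNIV. (mat 1 :: real^'n::finite^'n) $ i $ j * g j) = g i"
proof -
  have "(\<Sum>j\<in>UNIV. (mat 1 :: real^'n^'n) $ i $ j * g j) = (\<Sum>j\<in>UNIV. if i = j then g j else 0)"
    by (rule sum.cong) (auto simp: mat_def)
  then show ?thesis by simp
qed

lemma rownorm_mat_1: "rownorm (mat 1 :: real^'n::finite^'n) = 1"
  using sum_mat_1_row[of _ "\<lambda>_. 1"]
  by (simp add: rownorm_def mat_def if_distrib cong: if_cong)

lemma norm_le_rownorm: "norm A \<le> rownorm (A :: real^'n^'n::finite) * real CARD('n)"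
proof -
  have "norm A \<le> (\<Sum>i\<in>UNIV. norm (A $ i))"
    by (simp add: norm_vec_def L2_set_le_sum)
  also have "\<dots> \<le> (\<Sum>i\<in>(UNIV::'n set). rownorm A)"
    by (intro sum_mono order_trans[OF norm_le_l1_cart]) (simp add: rownorm_ge)
  finally show ?thesis by (simp add: mult.commute)
qed

lemma rownorm_le_norm: "rownorm (A :: real^'n^'n::finite) \<le> norm A * real CARD('n)"
proof -
  have "\<bar>A $ i $ j\<bar> \<le> norm A" for i j
    using component_le_norm_cart[of "A $ i" j] Finite_Cartesian_Product.norm_nth_le[of A i]
    by (rule order_trans)
  then have "(\<Sum>j\<in>UNIV. \<bar>A $ i $ j\<bar>) \<le> of_nat CARD('n) * norm A" for i
    by (intro sum_bounded_above)
  then show ?thesis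
    unfolding rownorm_le_iff by (simp add: mult.commute)
qed

lemma matrix_add_rdistrib: "(A + B) ** C = A ** C + B ** C"
  by (simp add: matrix_matrix_mult_def vec_eq_iff sum.distrib distrib_right)

(* real^'n^'n is not a real_normed_algebra_1; this copy of it is, so that the library's exp
   applies to matrices. *)
typedef ('n::finite) sqmat = "UNIV :: (real^'n^'n) set" by simp

lemma sqmat_eq_iff: "x = y \<longleftrightarrow> Rep_sqmat x = Rep_sqmat y"
  by (simp add: Rep_sqmat_inject)

instantiation sqmat :: (finite) real_normed_algebra_1
begin

definition "0 = Abs_sqmat 0"
definition "1 = Abs_sqmat (mat 1)"
definition "x + y = Abs_sqmat (Rep_sqmat x + Rep_sqmat y)"
definition "x - y = Abs_sqmat (Rep_sqmat x - Rep_sqmat y)"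
definition "- x = Abs_sqmat (- Rep_sqmat x)"
definition "x * y = Abs_sqmat (Rep_sqmat x ** Rep_sqmat y)"
definition "r *\<^sub>R x = Abs_sqmat (r *\<^sub>R Rep_sqmat x)"
definition "norm x = rownorm (Rep_sqmat x)"
definition "sgn x = inverse (norm x) *\<^sub>R x" for x :: "'a sqmat"
definition "dist x y = norm (x - y)" for x y :: "'a sqmat"
definition "uniformity = (INF e\<in>{0<..}. principal {(x :: 'a sqmat, y). dist x y < e})"
definition "open U = (\<forall>x\<in>U. \<forall>\<^sub>F (x', y) in uniformity. x' = x \<longrightarrow> y \<in> U)" for U :: "'a sqmat set"

lemma Rep_sqmat_simps [simp]:
  "Rep_sqmat 0 = 0" "Rep_sqmat 1 = mat 1"
  "Rep_sqmat (x + y) = Rep_sqmat x + Rep_sqmat y"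
  "Rep_sqmat (x - y) = Rep_sqmat x - Rep_sqmat y"
  "Rep_sqmat (- x) = - Rep_sqmat x"
  "Rep_sqmat (x * y) = Rep_sqmat x ** Rep_sqmat y"
  "Rep_sqmat (r *\<^sub>R x) = r *\<^sub>R Rep_sqmat x"
  by (simp_all add: zero_sqmat_def one_sqmat_def plus_sqmat_def minus_sqmat_def uminus_sqmat_def
      times_sqmat_def scaleR_sqmat_def Abs_sqmat_inverse)

instance
proof
  fix x y z :: "'a sqmat" and a b :: real
  show "a *\<^sub>R (x + y) = a *\<^sub>R x + a *\<^sub>R y" by (simp add: sqmat_eq_iff scaleR_add_right)
  show "(a + b) *\<^sub>R x = a *\<^sub>R x + b *\<^sub>R x" by (simp add: sqmat_eq_iff scaleR_add_left)
  show "a *\<^sub>R b *\<^sub>R x = (a * b) *\<^sub>R x" by (simp add: sqmat_eq_iff)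
  show "1 *\<^sub>R x = x" by (simp add: sqmat_eq_iff)
  show "x + y + z = x + (y + z)" by (simp add: sqmat_eq_iff add.assoc)
  show "x + y = y + x" by (simp add: sqmat_eq_iff add.commute)
  show "0 + x = x" by (simp add: sqmat_eq_iff)
  show "- x + x = 0" by (simp add: sqmat_eq_iff)
  show "x - y = x + - y" by (simp add: sqmat_eq_iff)
  show "a *\<^sub>R x * y = a *\<^sub>R (x * y)" by (simp add: sqmat_eq_iff scalar_matrix_assoc)
  show "x * a *\<^sub>R y = a *\<^sub>R (x * y)" by (simp add: sqmat_eq_iff matrix_scalar_ac scalar_matrix_assoc)
  show "x * y * z = x * (y * z)" by (simp add: sqmat_eq_iff matrix_mul_assoc)
  show "(x + y) * z = x * z + y * z" by (simp add: sqmat_eq_iff matrix_add_rdistrib)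
  show "x * (y + z) = x * y + x * z" by (simp add: sqmat_eq_iff matrix_add_ldistrib)
  show "1 * x = x" by (simp add: sqmat_eq_iff)
  show "x * 1 = x" by (simp add: sqmat_eq_iff)
  show "(0::'a sqmat) \<noteq> 1" by (simp add: sqmat_eq_iff mat_def vec_eq_iff)
  show "norm x = 0 \<longleftrightarrow> x = 0" by (simp add: norm_sqmat_def rownorm_eq_0_iff sqmat_eq_iff)
  show "norm (x + y) \<le> norm x + norm y" by (simp add: norm_sqmat_def rownorm_add)
  show "norm (a *\<^sub>R x) = \<bar>a\<bar> * norm x" by (simp add: norm_sqmat_def rownorm_scaleR)
  show "norm (x * y) \<le> norm x * norm y" by (simp add: norm_sqmat_def rownorm_mult)
  show "norm (1::'a sqmat) = 1" by (simp add: norm_sqmat_def rownorm_mat_1)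
  show "sgn x = inverse (norm x) *\<^sub>R x" by (simp add: sgn_sqmat_def)
  show "dist x y = norm (x - y)" by (simp add: dist_sqmat_def)
  show "uniformity = (INF e\<in>{0<..}. principal {(x :: 'a sqmat, y). dist x y < e})"
    by (simp add: uniformity_sqmat_def)
  show "open U = (\<forall>x\<in>U. \<forall>\<^sub>F (x', y) in uniformity. x' = x \<longrightarrow> y \<in> U)" for U :: "'a sqmat set"
    by (simp add: open_sqmat_def)
qed

end

lemma bounded_linear_Rep_sqmat: "bounded_linear (Rep_sqmat :: 'n::finite sqmat \<Rightarrow> real^'n^'n)"
  by (rule bounded_linear_intro[where K="real CARD('n)"])
    (simp_all add: norm_sqmat_def norm_le_rownorm)

lemma bounded_linear_Abs_sqmat: "bounded_linear (Abs_sqmat :: real^'n^'n \<Rightarrow> 'n::finite sqmat)"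
  by (rule bounded_linear_intro[where K="real CARD('n)"])
    (simp_all add: sqmat_eq_iff Abs_sqmat_inverse norm_sqmat_def rownorm_le_norm)

lemma bounded_linear_Rep_sqmat_entry: "bounded_linear (\<lambda>x::'n::finite sqmat. Rep_sqmat x $ i $ j)"
  using bounded_linear_compose[OF bounded_linear_vec_nth bounded_linear_vec_nth]
  by (rule bounded_linear_compose[OF _ bounded_linear_Rep_sqmat])

instance sqmat :: (finite) banach
proof
  fix X :: "nat \<Rightarrow> 'a sqmat"
  assume "Cauchy X"
  then have "Cauchy (\<lambda>n. Rep_sqmat (X n))"
    by (rule bounded_linear.Cauchy[OF bounded_linear_Rep_sqmat])
  then obtain L where "(\<lambda>n. Rep_sqmat (X n)) \<longlonglongrightarrow> L"
    using Cauchy_convergent convergent_def by blast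
  then have "(\<lambda>n. Abs_sqmat (Rep_sqmat (X n))) \<longlonglongrightarrow> Abs_sqmat L"
    by (rule bounded_linear.tendsto[OF bounded_linear_Abs_sqmat])
  then show "convergent X" by (auto simp: Rep_sqmat_inverse convergent_def)
qed

lemma Rep_sqmat_power: "Rep_sqmat (Abs_sqmat Q ^ n) = mat_pow Q n"
  by (induction n) (simp_all add: mat_pow_def Abs_sqmat_inverse power_Suc2 del: power_Suc)

lemma trans_mat_eq_exp: "trans_mat Q t = Rep_sqmat (exp (t *\<^sub>R Abs_sqmat Q))"
proof -
  have "Rep_sqmat (exp (t *\<^sub>R Abs_sqmat Q)) = (\<Sum>n. Rep_sqmat ((t *\<^sub>R Abs_sqmat Q) ^ n /\<^sub>R fact n))"
    unfolding exp_def by (rule bounded_linear.suminf[OF bounded_linear_Rep_sqmat summable_exp_generic])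
  then show ?thesis
    by (simp add: trans_mat_def scaleR_power Rep_sqmat_power divide_inverse_commute)
qed

lemma trans_mat_0: "trans_mat Q 0 = mat 1"
  by (simp add: trans_mat_eq_exp)

lemma trans_mat_add: "trans_mat Q (s + t) = trans_mat Q s ** trans_mat Q t"
  by (simp add: trans_mat_eq_exp scaleR_add_left exp_add_commuting)

lemma trans_mat_entry_has_vector_derivative:
  fixes Q :: "real^'n::finite^'n"
  shows "((\<lambda>t. trans_mat Q t $ i $ j) has_vector_derivative (trans_mat Q t ** Q) $ i $ j) (at t within S)"
  using bounded_linear.has_vector_derivative[OF bounded_linear_Rep_sqmat_entry
      exp_scaleR_has_vector_derivative_right[where A="Abs_sqmat Q"]]
  by (simp add: trans_mat_eq_exp Abs_sqmat_inverse)

lemma continuous_on_trans_mat_entry: "continuous_on S (\<lambda>t. trans_mat Q t $ i $ j)"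
  using trans_mat_entry_has_vector_derivative has_vector_derivative_continuous
  by (blast intro: continuous_at_imp_continuous_on)

lemma trans_mat_entry_tendsto_at_right_0:
  "((\<lambda>e. trans_mat Q e $ i $ j) \<longlongrightarrow> mat 1 $ i $ j) (at_right 0)"
  using has_vector_derivative_continuous[OF trans_mat_entry_has_vector_derivative[of Q i j 0 "{0<..}"]]
  by (simp add: continuous_within trans_mat_0)

lemma trans_mat_entry_difference_quotient_tendsto:
  "((\<lambda>e. (trans_mat Q e $ i $ j - mat 1 $ i $ j) / e) \<longlongrightarrow> Q $ i $ j) (at_right 0)"
  using trans_mat_entry_has_vector_derivative[of Q i j 0 "{0<..}"]
  by (simp add: has_real_derivative_iff_has_vector_derivative[symmetric] has_field_derivative_iff
      trans_mat_0)

definition generator :: "real^'n^'n::finite \<Rightarrow> bool" where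
  "generator Q \<longleftrightarrow> (\<forall>k. Q $ k \<in> E_set k)"

lemma generator_offdiag_nonneg: "generator Q \<Longrightarrow> j \<noteq> k \<Longrightarrow> 0 \<le> Q $ k $ j"
  by (simp add: generator_def E_set_def)

lemma generator_mult_1:
  assumes "generator Q" shows "Q *v 1 = 0"
proof -
  have "(\<Sum>j\<in>UNIV. Q $ k $ j) = Q $ k $ k + (\<Sum>j\<in>UNIV - {k}. Q $ k $ j)" for k
    by (simp add: sum.remove)
  with assms show ?thesis
    by (simp add: generator_def E_set_def matrix_vector_mult_def vec_eq_iff)
qed

lemma mat_pow_mult_1:
  assumes "Q *v 1 = 0" shows "mat_pow Q n *v 1 = (if n = 0 then 1 else 0)"
  by (cases n) (simp_all add: mat_pow_def matrix_vector_mul_assoc[symmetric] assms)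

lemma trans_mat_mult_1:
  fixes Q :: "real^'n::finite^'n"
  assumes "generator Q" shows "trans_mat Q t *v 1 = 1"
proof -
  have "linear (\<lambda>A::real^'n^'n. A *v 1)"
    by (rule linearI) (simp_all add: matrix_vector_mult_add_rdistrib scaleR_matrix_vector_assoc)
  then have "bounded_linear (\<lambda>x::'n sqmat. Rep_sqmat x *v 1)"
    by (intro bounded_linear_compose[OF _ bounded_linear_Rep_sqmat])
      (simp add: linear_conv_bounded_linear)
  have "trans_mat Q t *v 1 = (\<Sum>n. Rep_sqmat ((t *\<^sub>R Abs_sqmat Q) ^ n /\<^sub>R fact n) *v 1)"
    unfolding trans_mat_eq_exp exp_def
    by (rule bounded_linear.suminf[OF \<open>bounded_linear _\<close> summable_exp_generic])
  also have "\<dots> = (\<Sum>n. if n = 0 then 1 else 0)"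
    by (simp add: scaleR_power Rep_sqmat_power scaleR_matrix_vector_assoc[symmetric] mat_pow_mult_1
        generator_mult_1[OF assms] if_distrib cong: if_cong)
  also have "\<dots> = 1"
    using sums_single[of 0 "\<lambda>_. 1::real^'n"] sums_unique by fastforce
  finally show ?thesis .
qed

lemma exp_scaleR_nonneg_entries:
  fixes B :: "'n::finite sqmat"
  assumes "\<And>k j. 0 \<le> Rep_sqmat B $ k $ j" and "0 \<le> t"
  shows "0 \<le> Rep_sqmat (exp (t *\<^sub>R B)) $ i $ j"
proof -
  have power_nonneg: "0 \<le> Rep_sqmat (B ^ n) $ k $ j" for n k j
    by (induction n arbitrary: j)
      (simp_all add: mat_def power_Suc2 matrix_matrix_mult_def assms(1) sum_nonneg del: power_Suc)
  note entry = bounded_linear.suminf[OF bounded_linear_Rep_sqmat_entry]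
    bounded_linear.summable[OF bounded_linear_Rep_sqmat_entry]
  show ?thesis
    unfolding exp_def entry[OF summable_exp_generic]
    by (intro suminf_nonneg entry summable_exp_generic)
      (simp add: scaleR_power power_nonneg assms(2))
qed

lemma trans_mat_nonneg:
  fixes Q :: "real^'n::finite^'n"
  assumes "generator Q" and "0 \<le> t"
  shows "0 \<le> trans_mat Q t $ i $ j"
proof -
  define c where "c = (\<Sum>k\<in>UNIV. \<bar>Q $ k $ k\<bar>)"
  define B where "B = Abs_sqmat Q + c *\<^sub>R 1"
  \<comment> \<open>B is entrywise nonnegative and e^(tQ) = e^(-tc) e^(tB)\<close>
  have "0 \<le> Q $ k $ k + c" for k
    using member_le_sum[of k UNIV "\<lambda>k. \<bar>Q $ k $ k\<bar>"] unfolding c_def by simp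
  then have B_nonneg: "0 \<le> Rep_sqmat B $ k $ l" for k l
    using generator_offdiag_nonneg[OF assms(1), of l k]
    by (cases "k = l") (simp_all add: B_def Abs_sqmat_inverse mat_def)
  have "t *\<^sub>R Abs_sqmat Q = t *\<^sub>R B + (- (t * c)) *\<^sub>R 1"
    by (simp add: B_def algebra_simps)
  then have "exp (t *\<^sub>R Abs_sqmat Q) = exp (t *\<^sub>R B) * exp ((- (t * c)) *\<^sub>R 1)"
    by (simp only:) (rule exp_add_commuting, simp)
  also have "exp ((- (t * c)) *\<^sub>R (1 :: 'n sqmat)) = exp (- (t * c)) *\<^sub>R 1"
    using exp_of_real[of "- (t * c)", where 'a="'n sqmat"] by (simp add: of_real_def)
  finally have "trans_mat Q t $ i $ j = exp (- (t * c)) * Rep_sqmat (exp (t *\<^sub>R B)) $ i $ j"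
    by (simp add: trans_mat_eq_exp)
  then show ?thesis
    using exp_scaleR_nonneg_entries[OF B_nonneg assms(2)] by simp
qed

lemma trans_mat_row_sum:
  assumes "generator Q" shows "(\<Sum>j\<in>UNIV. trans_mat Q t $ i $ j) = 1"
  using trans_mat_mult_1[OF assms, of t] by (simp add: matrix_vector_mult_def vec_eq_iff)

lemma abs_trans_mat_le_1:
  assumes "generator Q" and "0 \<le> t"
  shows "\<bar>trans_mat Q t $ i $ j\<bar> \<le> 1"
proof -
  have "trans_mat Q t $ i $ j \<le> (\<Sum>j\<in>UNIV. trans_mat Q t $ i $ j)"
    by (rule member_le_sum) (simp_all add: trans_mat_nonneg[OF assms])
  then show ?thesis
    using trans_mat_row_sum[OF assms(1)] trans_mat_nonneg[OF assms] by simp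
qed

lemma tendsto_zero_mult_bounded:
  fixes a b :: "'a \<Rightarrow> real"
  assumes "(a \<longlongrightarrow> 0) F" and "\<forall>\<^sub>F x in F. \<bar>b x\<bar> \<le> B"
  shows "((\<lambda>x. a x * b x) \<longlongrightarrow> 0) F"
proof (rule Lim_null_comparison)
  show "\<forall>\<^sub>F x in F. norm (a x * b x) \<le> \<bar>a x\<bar> * B"
    using assms(2) by eventually_elim (simp add: abs_mult mult_left_mono)
  show "((\<lambda>x. \<bar>a x\<bar> * B) \<longlongrightarrow> 0) F"
    using tendsto_mult_left_zero[OF tendsto_rabs_zero[OF assms(1)]] .
qed

lemma set_integral_sum:
  fixes g :: "'i \<Rightarrow> 'a \<Rightarrow> real"
  assumes "finite I" and "\<And>k. k \<in> I \<Longrightarrow> set_integrable M A (g k)"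
  shows "(LINT x:A|M. \<Sum>k\<in>I. g k x) = (\<Sum>k\<in>I. LINT x:A|M. g k x)"
  unfolding set_lebesgue_integral_def scaleR_sum_right
  using assms by (intro Bochner_Integration.integral_sum) (auto simp: set_integrable_def)

lemma set_integral_Icc_average_tendsto:
  fixes h :: "real \<Rightarrow> real"
  assumes "continuous_on {0..} h"
  shows "((\<lambda>e. (LBINT t:{0..e}. h t) / e) \<longlongrightarrow> h 0) (at_right 0)"
proof -
  have "continuous_on {0..1} h"
    using assms by (rule continuous_on_subset) auto
  from integral_has_real_derivative[OF this, of 0]
  have "((\<lambda>e. (integral {0..e} h - integral {0..0} h) / (e - 0)) \<longlongrightarrow> h 0) (at_right 0)"
    by (simp add: has_field_derivative_iff at_within_Icc_at_right)
  moreover have "\<forall>\<^sub>F e in at_right 0. (integral {0..e} h - integral {0..0} h) / (e - 0)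
      = (LBINT t:{0..e}. h t) / e"
    using eventually_at_right_less
  proof eventually_elim
    case (elim e)
    have "set_integrable lborel {0..e} h"
      unfolding set_integrable_def
      by (rule borel_integrable_compact[OF compact_Icc continuous_on_subset[OF assms]]) auto
    then show ?case by (simp add: set_borel_integral_eq_integral(2))
  qed
  ultimately show ?thesis by (rule Lim_transform_eventually)
qed

lemma set_integral_Icc_tendsto_0:
  fixes h :: "real \<Rightarrow> real"
  assumes "continuous_on {0..} h"
  shows "((\<lambda>e. LBINT t:{0..e}. h t) \<longlongrightarrow> 0) (at_right 0)"
proof -
  have "((\<lambda>e. e * ((LBINT t:{0..e}. h t) / e)) \<longlongrightarrow> 0 * h 0) (at_right 0)"
    by (intro tendsto_mult set_integral_Icc_average_tendsto[OF assms]) (simp add: tendsto_ident_at)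
  moreover have "\<forall>\<^sub>F e in at_right 0. e * ((LBINT t:{0..e}. h t) / e) = (LBINT t:{0..e}. h t)"
    using eventually_at_right_less by eventually_elim simp
  ultimately show ?thesis by (simp add: Lim_transform_eventually)
qed

lemma sum_matrix_matrix_mult_row:
  "(\<Sum>j\<in>UNIV. (A ** B) $ i $ j * c j) = (\<Sum>k\<in>UNIV. A $ i $ k * (\<Sum>j\<in>UNIV. B $ k $ j * c j))"
proof -
  have "(\<Sum>j\<in>UNIV. (A ** B) $ i $ j * c j) = (\<Sum>j\<in>UNIV. \<Sum>k\<in>UNIV. A $ i $ k * (B $ k $ j * c j))"
    by (simp add: matrix_matrix_mult_def sum_distrib_right mult.assoc)
  also have "\<dots> = (\<Sum>k\<in>UNIV. A $ i $ k * (\<Sum>j\<in>UNIV. B $ k $ j * c j))"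
    by (subst sum.swap) (simp add: sum_distrib_left)
  finally show ?thesis .
qed

locale markov_reward =
  fixes f :: "real \<Rightarrow> 'n::finite \<Rightarrow> real^'n \<Rightarrow> real" and P :: "real^'n^'n"
  assumes generator: "generator P"
    and reward_continuous: "continuous_on {0..} (\<lambda>t. f t j (P $ j))"
    and reward_integrable: "set_integrable lborel {0..} (\<lambda>t. f t j (P $ j))"
begin

lemma weighted_reward_integrable:
  assumes S: "S \<in> sets borel" "S \<subseteq> {0..}"
    and w_cont: "\<And>j. continuous_on S (\<lambda>t. w t j)"
    and w_bound: "\<And>t j. t \<in> S \<Longrightarrow> \<bar>w t j\<bar> \<le> 1"
  shows "set_integrable lborel S (\<lambda>t. \<Sum>j\<in>UNIV. w t j * f t j (P $ j))" (is ?integrable)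
    and "\<bar>LINT t:S|lborel. \<Sum>j\<in>UNIV. w t j * f t j (P $ j)\<bar>
           \<le> (LINT t:{0..}|lborel. \<Sum>j\<in>UNIV. \<bar>f t j (P $ j)\<bar>)" (is ?bound)
proof -
  have dominating: "set_integrable lborel {0..} (\<lambda>t. \<Sum>j\<in>UNIV. \<bar>f t j (P $ j)\<bar>)"
    using set_integrable_abs[OF reward_integrable]
    unfolding set_integrable_def scaleR_sum_right by (intro Bochner_Integration.integrable_sum)
  then have dominating_S: "set_integrable lborel S (\<lambda>t. \<Sum>j\<in>UNIV. \<bar>f t j (P $ j)\<bar>)"
    by (rule set_integrable_subset) (use S in auto)
  have continuous: "continuous_on S (\<lambda>t. \<Sum>j\<in>UNIV. w t j * f t j (P $ j))"
    by (intro continuous_intros w_cont continuous_on_subset[OF reward_continuous S(2)])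
  have measurable: "set_borel_measurable lborel S (\<lambda>t. \<Sum>j\<in>UNIV. w t j * f t j (P $ j))"
    unfolding set_borel_measurable_def
    using borel_measurable_continuous_on_indicator[OF S(1) continuous] by simp
  have pointwise: "\<bar>\<Sum>j\<in>UNIV. w t j * f t j (P $ j)\<bar> \<le> (\<Sum>j\<in>UNIV. \<bar>f t j (P $ j)\<bar>)"
    if "t \<in> S" for t
    using w_bound[OF that]
    by (intro order_trans[OF sum_abs] sum_mono) (simp add: abs_mult mult_left_le_one_le)
  show ?integrable
    by (rule set_integrable_bound[OF dominating_S measurable])
      (auto intro!: AE_I2 order_trans[OF pointwise])
  have "\<bar>LINT t:S|lborel. \<Sum>j\<in>UNIV. w t j * f t j (P $ j)\<bar>
      \<le> (LINT t:S|lborel. \<Sum>j\<in>UNIV. \<bar>f t j (P $ j)\<bar>)"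
    using set_integral_norm_bound[OF \<open>?integrable\<close>]
      set_integral_mono[OF set_integrable_abs[OF \<open>?integrable\<close>] dominating_S pointwise]
    by simp
  also have "\<dots> \<le> (LINT t:{0..}|lborel. \<Sum>j\<in>UNIV. \<bar>f t j (P $ j)\<bar>)"
    using dominating_S dominating S(2)
    unfolding set_lebesgue_integral_def set_integrable_def
    by (intro integral_mono) (auto split: split_indicator intro: sum_nonneg)
  finally show ?bound .
qed

lemma Fshift_eq_tail_integral:
  assumes "0 \<le> e"
  shows "Fshift f e P k = (LINT t:{e<..}|lborel. \<Sum>j\<in>UNIV. trans_mat P (t - e) $ k $ j * f t j (P $ j))"
proof -
  define H where "H t = (\<Sum>j\<in>UNIV. trans_mat P (t - e) $ k $ j * f t j (P $ j))" for t
  have continuous: "continuous_on {e..} H"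
    unfolding H_def using assms
    by (intro continuous_intros continuous_on_compose2[OF continuous_on_trans_mat_entry[of UNIV]]
        continuous_on_subset[OF reward_continuous]) auto
  then have "continuous_on {e<..} H"
    by (rule continuous_on_subset) auto
  have "set_borel_measurable lborel {e<..} H" "set_borel_measurable lborel {e..} H"
    unfolding set_borel_measurable_def
    using borel_measurable_continuous_on_indicator[of "{e..}" H]
      borel_measurable_continuous_on_indicator[of "{e<..}" H] continuous \<open>continuous_on {e<..} H\<close>
    by simp_all
  moreover have "AE t in lborel. t \<in> {e<..} \<longleftrightarrow> t \<in> {e..}"
    using AE_lborel_singleton[of e] by eventually_elim auto
  ultimately have tail: "(LINT t:{e..}|lborel. H t) = (LINT t:{e<..}|lborel. H t)"
    by (rule set_integral_cong_set)
  have "Fshift f e P k = (\<integral>t. indicator {e..} (e + 1 * t) *\<^sub>R H (e + 1 * t) \<partial>lborel)"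
    unfolding Fshift_def set_lebesgue_integral_def
    by (rule Bochner_Integration.integral_cong) (auto simp: H_def add.commute indicator_def)
  also have "\<dots> = (LINT t:{e..}|lborel. H t)"
    using lborel_integral_real_affine[of 1 "\<lambda>t. indicator {e..} t *\<^sub>R H t" e]
    by (simp add: set_lebesgue_integral_def)
  also note tail
  finally show ?thesis unfolding H_def .
qed

lemma tail_integral_integrable:
  assumes "0 \<le> e"
  shows "set_integrable lborel {e<..} (\<lambda>t. \<Sum>j\<in>UNIV. trans_mat P (t - e) $ k $ j * f t j (P $ j))"
    and "\<bar>LINT t:{e<..}|lborel. \<Sum>j\<in>UNIV. trans_mat P (t - e) $ k $ j * f t j (P $ j)\<bar>
           \<le> (LINT t:{0..}|lborel. \<Sum>j\<in>UNIV. \<bar>f t j (P $ j)\<bar>)"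
  using assms
  by (intro weighted_reward_integrable abs_trans_mat_le_1[OF generator]
      continuous_on_compose2[OF continuous_on_trans_mat_entry[of UNIV]] continuous_intros; auto)+

lemma Fshift_bounded: "\<exists>B. \<forall>e\<ge>0. \<forall>k. \<bar>Fshift f e P k\<bar> \<le> B"
  using tail_integral_integrable(2) by (auto simp: Fshift_eq_tail_integral)

lemma Fswitch_eq:
  assumes "0 < e"
  shows "Fswitch f X P e i = (LBINT t:{0..e}. \<Sum>j\<in>UNIV. trans_mat X t $ i $ j * f t j (X $ j))
           + (\<Sum>k\<in>UNIV. trans_mat X e $ i $ k * Fshift f e P k)"
  using assms
  by (simp add: Fswitch_def sum_matrix_matrix_mult_row set_integral_sum tail_integral_integrable(1)
      Fshift_eq_tail_integral)

lemma Fval_eq_Fswitch: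
  assumes "0 < e"
  shows "Fval f P i = Fswitch f P P e i"
proof -
  define h where "h t = (\<Sum>j\<in>UNIV. trans_mat P t $ i $ j * f t j (P $ j))" for t
  have integrable: "set_integrable lborel S h" if "S \<in> sets borel" "S \<subseteq> {0..}" for S
    unfolding h_def using that
    by (intro weighted_reward_integrable continuous_on_trans_mat_entry abs_trans_mat_le_1[OF generator]) auto
  have "{0..} = {0..e} \<union> {e<..}" using assms by auto
  then have "Fval f P i = (LBINT t:{0..e}. h t) + (LBINT t:{e<..}. h t)"
    unfolding Fval_def h_def[symmetric]
    by (simp only:) (rule set_integral_Un; use assms in \<open>auto intro!: integrable\<close>)
  moreover have "h t = (\<Sum>j\<in>UNIV. (trans_mat P e ** trans_mat P (t - e)) $ i $ j * f t j (P $ j))" for t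
    by (simp add: h_def trans_mat_add[symmetric])
  ultimately show ?thesis by (simp add: Fswitch_def h_def)
qed

end

context markov_reward
begin

lemma Fshift_tendsto_Fval: "((\<lambda>e. \<chi> k. Fshift f e P k) \<longlongrightarrow> (\<chi> k. Fval f P k)) (at_right 0)"
proof (intro tendsto_vec_lambda)
  fix k
  obtain B where B: "\<And>e m. 0 \<le> e \<Longrightarrow> \<bar>Fshift f e P m\<bar> \<le> B"
    using Fshift_bounded by blast
  define A where "A e = (LBINT t:{0..e}. \<Sum>j\<in>UNIV. trans_mat P t $ k $ j * f t j (P $ j))" for e
  have "((\<lambda>e. Fval f P k - A e - (\<Sum>m\<in>UNIV. (trans_mat P e $ k $ m - mat 1 $ k $ m) * Fshift f e P m))
      \<longlongrightarrow> Fval f P k - 0 - 0) (at_right 0)"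
    unfolding A_def
  proof (intro tendsto_diff tendsto_const set_integral_Icc_tendsto_0 tendsto_null_sum
      tendsto_zero_mult_bounded)
    show "continuous_on {0..} (\<lambda>t. \<Sum>j\<in>UNIV. trans_mat P t $ k $ j * f t j (P $ j))"
      by (intro continuous_intros continuous_on_trans_mat_entry reward_continuous)
    fix m
    show "((\<lambda>e. trans_mat P e $ k $ m - mat 1 $ k $ m) \<longlongrightarrow> 0) (at_right 0)"
      using trans_mat_entry_tendsto_at_right_0 by (rule LIM_zero)
    show "\<forall>\<^sub>F e in at_right 0. \<bar>Fshift f e P m\<bar> \<le> B"
      using eventually_at_right_less by eventually_elim (simp add: B)
  qed
  moreover have "\<forall>\<^sub>F e in at_right 0. Fval f P k - A e
      - (\<Sum>m\<in>UNIV. (trans_mat P e $ k $ m - mat 1 $ k $ m) * Fshift f e P m) = Fshift f e P k"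
    using eventually_at_right_less
  proof eventually_elim
    case (elim e)
    then show ?case
      by (simp add: Fval_eq_Fswitch Fswitch_eq A_def left_diff_distrib sum_subtractf sum_mat_1_row)
  qed
  ultimately show "((\<lambda>e. Fshift f e P k) \<longlongrightarrow> Fval f P k) (at_right 0)"
    by (simp add: Lim_transform_eventually)
qed

lemma Fswitch_first_order:
  assumes X_continuous: "\<And>j. continuous_on {0..} (\<lambda>t. f t j (X $ j))"
  shows "((\<lambda>e. (Fswitch f X P e i - Fshift f e P i
            - (f 0 i (X $ i) + (\<chi> j. Fshift f e P j) \<bullet> (X $ i)) * e) / e) \<longlongrightarrow> 0) (at_right 0)"
proof -
  obtain B where B: "\<And>e m. 0 \<le> e \<Longrightarrow> \<bar>Fshift f e P m\<bar> \<le> B"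
    using Fshift_bounded by blast
  define A where "A e = (LBINT t:{0..e}. \<Sum>j\<in>UNIV. trans_mat X t $ i $ j * f t j (X $ j))" for e
  have "((\<lambda>e. (A e / e - f 0 i (X $ i))
      + (\<Sum>k\<in>UNIV. ((trans_mat X e $ i $ k - mat 1 $ i $ k) / e - X $ i $ k) * Fshift f e P k))
      \<longlongrightarrow> 0 + 0) (at_right 0)"
  proof (intro tendsto_add tendsto_null_sum tendsto_zero_mult_bounded)
    have "continuous_on {0..} (\<lambda>t. \<Sum>j\<in>UNIV. trans_mat X t $ i $ j * f t j (X $ j))"
      by (intro continuous_intros continuous_on_trans_mat_entry X_continuous)
    from set_integral_Icc_average_tendsto[OF this]
    show "((\<lambda>e. A e / e - f 0 i (X $ i)) \<longlongrightarrow> 0) (at_right 0)"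
      by (simp add: A_def trans_mat_0 sum_mat_1_row LIM_zero)
    fix k
    show "((\<lambda>e. (trans_mat X e $ i $ k - mat 1 $ i $ k) / e - X $ i $ k) \<longlongrightarrow> 0) (at_right 0)"
      using trans_mat_entry_difference_quotient_tendsto by (rule LIM_zero)
    show "\<forall>\<^sub>F e in at_right 0. \<bar>Fshift f e P k\<bar> \<le> B"
      using eventually_at_right_less by eventually_elim (simp add: B)
  qed
  moreover have "\<forall>\<^sub>F e in at_right 0. (A e / e - f 0 i (X $ i))
      + (\<Sum>k\<in>UNIV. ((trans_mat X e $ i $ k - mat 1 $ i $ k) / e - X $ i $ k) * Fshift f e P k)
    = (Fswitch f X P e i - Fshift f e P i - (f 0 i (X $ i) + (\<chi> j. Fshift f e P j) \<bullet> (X $ i)) * e) / e"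
    using eventually_at_right_less
  proof eventually_elim
    case (elim e)
    have "(\<Sum>k\<in>UNIV. ((trans_mat X e $ i $ k - mat 1 $ i $ k) / e - X $ i $ k) * Fshift f e P k)
        = (\<Sum>k\<in>UNIV. trans_mat X e $ i $ k * Fshift f e P k) / e
          - (\<Sum>k\<in>UNIV. mat 1 $ i $ k * Fshift f e P k) / e - (\<Sum>k\<in>UNIV. X $ i $ k * Fshift f e P k)"
      (is "?sum = _")
      by (simp add: left_diff_distrib diff_divide_distrib sum_subtractf sum_divide_distrib)
    also have "\<dots> = (\<Sum>k\<in>UNIV. trans_mat X e $ i $ k * Fshift f e P k) / e - Fshift f e P i / e
          - (\<chi> j. Fshift f e P j) \<bullet> (X $ i)"
      unfolding sum_mat_1_row by (simp add: inner_vec_def mult.commute)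
    finally have sum_eq: "?sum = (\<Sum>k\<in>UNIV. trans_mat X e $ i $ k * Fshift f e P k) / e
        - Fshift f e P i / e - (\<chi> j. Fshift f e P j) \<bullet> (X $ i)" .
    show ?case
      unfolding sum_eq Fswitch_eq[OF elim] A_def using elim by (simp add: field_simps)
  qed
  ultimately show ?thesis by (simp add: Lim_transform_eventually)
qed

lemma Fval_minus_Fswitch_first_order:
  assumes X_continuous: "\<And>j. continuous_on {0..} (\<lambda>t. f t j (X $ j))"
  shows "((\<lambda>e. (Fval f P i - Fswitch f X P e i
            - (GammaQ f P i (P $ i) - GammaQ f P i (X $ i)) * e) / e) \<longlongrightarrow> 0) (at_right 0)"
proof -
  define R where "R Y e = (Fswitch f Y P e i - Fshift f e P i
    - (f 0 i (Y $ i) + (\<chi> j. Fshift f e P j) \<bullet> (Y $ i)) * e) / e" for Y e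
  have "((\<lambda>e. R P e - R X e + ((\<chi> k. Fshift f e P k) - (\<chi> k. Fval f P k)) \<bullet> (P $ i - X $ i))
      \<longlongrightarrow> 0 - 0 + 0 \<bullet> (P $ i - X $ i)) (at_right 0)"
    unfolding R_def
    by (intro tendsto_intros Fswitch_first_order X_continuous reward_continuous
        LIM_zero Fshift_tendsto_Fval)
  moreover have "\<forall>\<^sub>F e in at_right 0.
      R P e - R X e + ((\<chi> k. Fshift f e P k) - (\<chi> k. Fval f P k)) \<bullet> (P $ i - X $ i)
    = (Fval f P i - Fswitch f X P e i - (GammaQ f P i (P $ i) - GammaQ f P i (X $ i)) * e) / e"
    using eventually_at_right_less
  proof eventually_elim
    case (elim e)
    then show ?case
      by (simp add: R_def GammaQ_def Fval_eq_Fswitch[OF elim] inner_diff_left inner_diff_right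
          inner_commute field_simps)
  qed
  ultimately show ?thesis by (simp add: Lim_transform_eventually)
qed

end

lemma condI_set_integrable:
  assumes "condI D f" and "q \<in> D j" and "continuous_on {0..} (\<lambda>t. f t j q)"
  shows "set_integrable lborel {0..} (\<lambda>t. f t j q)"
proof -
  define c where "c = norm q + 1"
  define G where "G t = (SUP p\<in>{(i, q). q \<in> D i \<and> norm q \<le> c}. ennreal \<bar>f t (fst p) (snd p)\<bar>)" for t
  have "c > 0"
    unfolding c_def by (simp add: add_nonneg_pos)
  then have "(\<integral>\<^sup>+ t. G t * indicator {0..} t \<partial>lborel) < \<infinity>"
    using assms(1) unfolding condI_def G_def by blast
  moreover have "ennreal \<bar>f t j q\<bar> \<le> G t" for t
    unfolding G_def using assms(2) by (intro SUP_upper2[of "(j, q)"]) (auto simp: c_def)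
  then have "(\<integral>\<^sup>+ t. ennreal (norm (indicator {0..} t *\<^sub>R f t j q)) \<partial>lborel)
      \<le> (\<integral>\<^sup>+ t. G t * indicator {0..} t \<partial>lborel)"
    by (intro nn_integral_mono) (auto split: split_indicator)
  ultimately show ?thesis
    unfolding set_integrable_def
    using borel_measurable_continuous_on_indicator[OF _ assms(3)]
    by (intro integrableI_bounded) auto
qed

theorem mainTheorem1:
  fixes D :: "'n::finite \<Rightarrow> (real^'n) set"
    and f :: "real \<Rightarrow> 'n \<Rightarrow> real^'n \<Rightarrow> real"
    and Q Qs :: "real^'n^'n"
    and i :: 'n
  assumes DE: "\<And>j. D j \<subseteq> E_set j"
    and C: "condC D f" and I: "condI D f"
    and Q: "Q \<in> genset D" and Qs: "Qs \<in> genset D"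
  shows "((\<lambda>\<epsilon>. (Fswitch f Q Qs \<epsilon> i - Fshift f \<epsilon> Qs i
              - (f 0 i (Q $ i) + (\<chi> j. Fshift f \<epsilon> Qs j) \<bullet> (Q $ i)) * \<epsilon>) / \<epsilon>)
           \<longlongrightarrow> 0) (at_right 0)
       \<and> (condH D f \<longrightarrow>
          ((\<lambda>\<epsilon>. (Fval f Qs i - Fswitch f Q Qs \<epsilon> i
              - (GammaQ f Qs i (Qs $ i) - GammaQ f Qs i (Q $ i)) * \<epsilon>) / \<epsilon>)
           \<longlongrightarrow> 0) (at_right 0))"
proof -
  have QD: "Q $ j \<in> D j" and QsD: "Qs $ j \<in> D j" for j
    using Q Qs by (auto simp: genset_def)
  have continuous: "continuous_on {0..} (\<lambda>t. f t j q)" if "q \<in> D j" for j q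
    using C that by (simp add: condC_def)
  have "generator Qs"
    using QsD DE by (auto simp: generator_def)
  then interpret markov_reward f Qs
    by unfold_locales (auto intro: continuous condI_set_integrable[OF I] QsD)
  show ?thesis
    using Fswitch_first_order Fval_minus_Fswitch_first_order continuous[OF QD] by blast
qed

end
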